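(* Let $n\ge1$ and let $\tau>0$ be real. For an integer $T\ge1$, let $N(T)$ be the number of integer vectors $w\in\{0,1,\dots,T-1\}^n$ such that $e(w/T)\le T^{\frac{1-\tau}{n+1}}$. Then $N(T)/T^n\to 0$ as $T\to\infty$.
   Context: For $\omega\in\mathbb{R}^n$, $R(\omega)=\{k\in\mathbb{Z}^n:\langle k,\omega\rangle\in\mathbb{Z}\}$, $|k|=\max_i|k_i|$, and $e(\omega)=\min_{k\in R(\omega)\setminus\{0\}}|k|$ (for $\omega=w/T$ with $w\in\mathbb{Z}^n$, $R(\omega)$ contains $T\mathbb{Z}^n$, so this minimum exists). *)

theory Defs
  imports "HOL-Analysis.Analysis"
begin

definition resonance_lattice :: "real^'n \<Rightarrow> (int^'n) set" where
  "resonance_lattice \<omega> = {k. (\<Sum>i\<in>UNIV. of_int (k$i) * \<omega>$i) \<in> \<int>}"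

definition maxnorm :: "int^'n \<Rightarrow> nat" where
  "maxnorm k = Max (range (\<lambda>i. nat \<bar>k$i\<bar>))"

definition e_res :: "real^'n \<Rightarrow> nat" where
  "e_res \<omega> = (LEAST m. \<exists>k\<in>resonance_lattice \<omega>. k \<noteq> 0 \<and> maxnorm k = m)"

definition N_count :: "real \<Rightarrow> nat \<Rightarrow> 'n::finite itself \<Rightarrow> nat" where
  "N_count \<tau> T _ = card {w :: int^'n. (\<forall>i. 0 \<le> w$i \<and> w$i < int T) \<and>
      real (e_res (\<chi> i. real_of_int (w$i) / real T))
        \<le> real T powr ((1 - \<tau>) / (real CARD('n) + 1))}"

end

theory Submission imports Defs begin

text \<open>If \<open>e(w/T) \<le> m\<close>, some nonzero \<open>k\<close> with \<open>|k| \<le> m\<close> satisfies \<open>T | \<langle>k, w\<rangle>\<close>. There are at most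
  \<open>(2m+1)^n\<close> such \<open>k\<close>, and for each of them the grid points \<open>w \<in> [0,T)^n\<close> with \<open>T | \<langle>k, w\<rangle>\<close>
  number at most \<open>(2nm+1) T^(n-1)\<close>: a coordinate \<open>j\<close> with \<open>k_j \<noteq> 0\<close> is determined by the other
  coordinates and the quotient \<open>\<langle>k, w\<rangle>/T \<in> [-nm, nm]\<close>. Hence \<open>N(T) \<le> C m^(n+1) T^(n-1)\<close>,
  and with \<open>m \<le> T^((1-\<tau>)/(n+1))\<close> this is \<open>O(T^(n-\<tau>))\<close>.\<close>

definition grid :: "nat \<Rightarrow> (int^'n::finite) set" where
  "grid T = {w. \<forall>i. 0 \<le> w$i \<and> w$i < int T}"

lemma bij_betw_vec_nth_box:
  "bij_betw vec_nth {x::'a^'n. \<forall>i. x$i \<in> A} (Pi\<^sub>E UNIV (\<lambda>_. A))"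
  by (intro bij_betwI[of _ _ _ vec_lambda]) (auto simp: vec_eq_iff PiE_UNIV_domain)

lemma finite_vec_box: "finite A \<Longrightarrow> finite {x::'a^'n::finite. \<forall>i. x$i \<in> A}"
  using bij_betw_finite[OF bij_betw_vec_nth_box[of A]] by (simp add: finite_PiE)

lemma card_vec_box: "card {x::'a^'n::finite. \<forall>i. x$i \<in> A} = card A ^ CARD('n)"
  using bij_betw_same_card[OF bij_betw_vec_nth_box] by (simp add: card_PiE)

lemma grid_eq_vec_box: "grid T = {w. \<forall>i. w$i \<in> {0..<int T}}"
  by (auto simp: grid_def)

lemma finite_grid: "finite (grid T)"
  unfolding grid_eq_vec_box by (rule finite_vec_box) simp

lemma maxnorm_le_iff: "maxnorm k \<le> m \<longleftrightarrow> (\<forall>i. \<bar>k$i\<bar> \<le> int m)"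
  unfolding maxnorm_def by (simp add: Max_le_iff nat_le_iff)

lemma maxnorm_le_eq_vec_box: "{k. maxnorm k \<le> m} = {k. \<forall>i. k$i \<in> {-int m..int m}}"
  by (auto simp add: maxnorm_le_iff abs_le_iff conj_commute minus_le_iff)

lemma finite_maxnorm_le: "finite {k::int^'n::finite. maxnorm k \<le> m}"
  unfolding maxnorm_le_eq_vec_box by (rule finite_vec_box) simp

lemma card_maxnorm_le: "card {k::int^'n::finite. maxnorm k \<le> m} = (2*m+1) ^ CARD('n)"
  unfolding maxnorm_le_eq_vec_box card_vec_box by (simp add: nat_add_distrib nat_mult_distrib)

lemma of_int_divide_in_Ints_iff:
  assumes "T > 0"
  shows "(of_int s / of_nat T :: 'a::field_char_0) \<in> \<int> \<longleftrightarrow> int T dvd s"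
proof
  assume "(of_int s / of_nat T :: 'a) \<in> \<int>"
  then obtain q where "(of_int s / of_nat T :: 'a) = of_int q" by (auto elim: Ints_cases)
  then have "of_int s = (of_int (int T * q) :: 'a)" using assms by (simp add: field_simps)
  then show "int T dvd s" by (simp only: of_int_eq_iff) simp
qed (use assms in auto)

lemma resonance_lattice_grid_iff:
  assumes "T > 0"
  shows "k \<in> resonance_lattice (\<chi> i. of_int (w$i) / real T) \<longleftrightarrow> int T dvd (\<Sum>i\<in>UNIV. k$i * w$i)"
proof -
  have sum_eq: "(\<Sum>i\<in>UNIV. of_int (k$i) * (\<chi> i. of_int (w$i) / real T)$i)
      = of_int (\<Sum>i\<in>UNIV. k$i * w$i) / real T"
    by (simp add: sum_divide_distrib)
  show ?thesis
    unfolding resonance_lattice_def mem_Collect_eq sum_eq by (rule of_int_divide_in_Ints_iff[OF assms])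
qed

lemma e_res_attained:
  assumes "k \<in> resonance_lattice \<omega>" "k \<noteq> 0"
  obtains k' where "k' \<in> resonance_lattice \<omega>" "k' \<noteq> 0" "maxnorm k' = e_res \<omega>"
  using LeastI_ex[of "\<lambda>m. \<exists>k\<in>resonance_lattice \<omega>. k \<noteq> 0 \<and> maxnorm k = m"] assms
  unfolding e_res_def by blast

lemma small_e_res_subset:
  assumes "T > 0"
  shows "{w \<in> (grid T :: (int^'n::finite) set). e_res (\<chi> i. of_int (w$i) / real T) \<le> m}
    \<subseteq> (\<Union>k\<in>{k. k \<noteq> 0 \<and> maxnorm k \<le> m}. {w \<in> grid T. int T dvd (\<Sum>i\<in>UNIV. k$i * w$i)})"
    (is "?S \<subseteq> ?U")
proof
  fix w :: "int^'n" assume w: "w \<in> ?S"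
  let ?\<omega> = "\<chi> i. of_int (w$i) / real T"
  \<comment> \<open>\<open>(T,\<dots>,T)\<close> is resonant, so the \<open>LEAST\<close> in \<open>e_res\<close> is attained and not a junk value.\<close>
  have "(\<chi> i. int T) \<in> resonance_lattice ?\<omega>"
    using assms by (simp add: resonance_lattice_grid_iff sum_distrib_left[symmetric])
  moreover have "(\<chi> i. int T) \<noteq> (0 :: int^'n)"
    using assms by (simp add: vec_eq_iff)
  ultimately obtain k where "k \<in> resonance_lattice ?\<omega>" "k \<noteq> 0" "maxnorm k = e_res ?\<omega>"
    by (rule e_res_attained)
  with w assms show "w \<in> ?U"
    by (auto simp: resonance_lattice_grid_iff)
qed

lemma abs_linear_form_grid_le:
  fixes k w :: "int^'n::finite"
  assumes "w \<in> grid T" "maxnorm k \<le> m"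
  shows "\<bar>\<Sum>i\<in>UNIV. k$i * w$i\<bar> \<le> int (CARD('n) * m * T)"
proof -
  have "\<bar>k$i * w$i\<bar> \<le> int m * int T" for i
  proof -
    have "\<bar>k$i\<bar> \<le> int m" using assms(2) by (simp add: maxnorm_le_iff)
    moreover have "0 \<le> w$i" "w$i < int T"
      using assms(1) by (auto simp: grid_def)
    ultimately show ?thesis by (simp add: abs_mult mult_mono)
  qed
  then have "\<bar>\<Sum>i\<in>UNIV. k$i * w$i\<bar> \<le> (\<Sum>i\<in>(UNIV::'n set). int m * int T)"
    by (intro order.trans[OF sum_abs] sum_mono)
  then show ?thesis by simp
qed

lemma linear_form_eq_imp_eq:
  fixes k w w' :: "int^'n::finite"
  assumes "k$j \<noteq> 0" "\<And>i. i \<noteq> j \<Longrightarrow> w$i = w'$i"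
    and "(\<Sum>i\<in>UNIV. k$i * w$i) = (\<Sum>i\<in>UNIV. k$i * w'$i)"
  shows "w = w'"
proof -
  have "(\<Sum>i\<in>UNIV - {j}. k$i * w$i) = (\<Sum>i\<in>UNIV - {j}. k$i * w'$i)"
    using assms(2) by (intro sum.cong) auto
  with assms(3) have "k$j * w$j = k$j * w'$j"
    by (simp add: sum.remove[of UNIV j])
  with assms(1,2) show ?thesis
    by (metis mult_cancel_left vec_eq_iff)
qed

lemma card_grid_dvd_linear_form_le:
  fixes k :: "int^'n::finite"
  assumes "k \<noteq> 0" "maxnorm k \<le> m"
  shows "card {w \<in> grid T. int T dvd (\<Sum>i\<in>UNIV. k$i * w$i)} \<le> (2*CARD('n)*m + 1) * T^(CARD('n) - 1)"
proof -
  obtain j where j: "k$j \<noteq> 0" using assms(1) by (metis vec_eq_iff zero_index)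
  let ?A = "{w \<in> grid T. int T dvd (\<Sum>i\<in>UNIV. k$i * w$i)}"
  let ?r = "int (CARD('n) * m)"
  let ?B = "((UNIV - {j}) \<rightarrow>\<^sub>E {0..<int T}) \<times> {-?r..?r}"
  define f where "f w = (restrict (vec_nth w) (UNIV - {j}), (\<Sum>i\<in>UNIV. k$i * w$i) div int T)" for w
  have "inj_on f ?A"
  proof (rule inj_onI)
    fix w w' assume "w \<in> ?A" "w' \<in> ?A" and eq: "f w = f w'"
    then have "(\<Sum>i\<in>UNIV. k$i * w$i) = (\<Sum>i\<in>UNIV. k$i * w'$i)"
      by (auto simp: f_def dvd_div_eq_iff)
    moreover have "w$i = w'$i" if "i \<noteq> j" for i
      using eq that by (auto simp: f_def restrict_def fun_eq_iff dest: spec[of _ i])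
    ultimately show "w = w'"
      by (intro linear_form_eq_imp_eq[OF j])
  qed
  moreover have "f ` ?A \<subseteq> ?B"
  proof
    fix x assume "x \<in> f ` ?A"
    then obtain w where w: "w \<in> grid T" "int T dvd (\<Sum>i\<in>UNIV. k$i * w$i)" and x: "x = f w"
      by blast
    have "\<bar>(\<Sum>i\<in>UNIV. k$i * w$i) div int T\<bar> \<le> ?r"
      using w(2) abs_linear_form_grid_le[OF w(1) assms(2)] by (auto elim!: dvdE simp: abs_mult)
    with w(1) show "x \<in> ?B"
      by (auto simp: x f_def grid_def abs_le_iff)
  qed
  ultimately have "card ?A \<le> card ?B"
    by (rule card_inj_on_le) (simp add: finite_PiE)
  also have "card ?B = T^(CARD('n) - 1) * (2*CARD('n)*m + 1)"
    by (simp add: card_cartesian_product card_PiE card_Diff_singleton nat_add_distrib nat_mult_distrib)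
  finally show ?thesis by (simp add: mult.commute)
qed

lemma card_small_e_res_le:
  assumes "T > 0"
  shows "card {w \<in> (grid T :: (int^'n::finite) set). e_res (\<chi> i. of_int (w$i) / real T) \<le> m}
    \<le> (2*m+1)^CARD('n) * (2*CARD('n)*m + 1) * T^(CARD('n) - 1)"
proof -
  let ?K = "{k::int^'n. k \<noteq> 0 \<and> maxnorm k \<le> m}"
  let ?A = "\<lambda>k. {w \<in> grid T. int T dvd (\<Sum>i\<in>UNIV. k$i * w$i)}"
  have finite_K: "finite ?K"
    by (rule finite_subset[OF _ finite_maxnorm_le]) auto
  have card_K: "card ?K \<le> (2*m+1)^CARD('n)"
    using card_mono[OF finite_maxnorm_le, of ?K m] card_maxnorm_le[where 'n='n, of m] by auto
  have "card {w \<in> (grid T :: (int^'n) set). e_res (\<chi> i. of_int (w$i) / real T) \<le> m} \<le> card (\<Union>k\<in>?K. ?A k)"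
    by (rule card_mono[OF _ small_e_res_subset[OF assms]]) (simp add: finite_K finite_grid)
  also have "\<dots> \<le> (\<Sum>k\<in>?K. card (?A k))"
    by (rule card_UN_le[OF finite_K])
  also have "\<dots> \<le> (\<Sum>k\<in>?K. (2*CARD('n)*m + 1) * T^(CARD('n) - 1))"
    by (intro sum_mono card_grid_dvd_linear_form_le) auto
  also have "\<dots> = card ?K * ((2*CARD('n)*m + 1) * T^(CARD('n) - 1))"
    by simp
  also have "\<dots> \<le> (2*m+1)^CARD('n) * (2*CARD('n)*m + 1) * T^(CARD('n) - 1)"
    unfolding mult.assoc[of "(2*m+1)^CARD('n)"] using card_K by (rule mult_right_mono) simp
  finally show ?thesis .
qed

lemma counting_bound_le_power:
  fixes m n :: nat and P :: real
  assumes "real m \<le> P" "1 \<le> P"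
  shows "real ((2*m+1)^n * (2*n*m + 1)) \<le> 3^n * (2*real n + 1) * P^(n+1)"
proof -
  have "real ((2*m+1)^n * (2*n*m + 1)) = (2*real m + 1)^n * (2*real n*real m + 1)"
    by (simp add: algebra_simps)
  also have "\<dots> \<le> (3*P)^n * ((2*real n + 1) * P)"
  proof (intro mult_mono power_mono)
    show "2*real n*real m + 1 \<le> (2*real n + 1) * P"
      using assms mult_left_mono[OF assms(1), of "2*real n"] by (simp add: algebra_simps)
  qed (use assms in auto)
  also have "\<dots> = 3^n * (2*real n + 1) * P^(n+1)"
    by (simp add: power_mult_distrib algebra_simps)
  finally show ?thesis .
qed

lemma N_count_le_card_small_e_res:
  "N_count \<tau> T TYPE('n::finite) \<le> card {w \<in> (grid T :: (int^'n) set).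
     e_res (\<chi> i. of_int (w$i) / real T) \<le> nat \<lfloor>real T powr ((1 - \<tau>) / (real CARD('n) + 1))\<rfloor>}"
  unfolding N_count_def
  by (rule card_mono[OF finite_subset[OF _ finite_grid]]) (auto simp: grid_def le_nat_floor)

lemma N_count_ratio_le:
  assumes "T > 0"
  shows "real (N_count \<tau> T TYPE('n::finite)) / real T ^ CARD('n)
    \<le> 3^CARD('n) * (2*real CARD('n) + 1) * real T powr (max (1 - \<tau>) 0 - 1)"
proof -
  define n where "n = CARD('n)"
  define m where "m = nat \<lfloor>real T powr ((1 - \<tau>) / (real n + 1))\<rfloor>"
  define P where "P = real T powr (max (1 - \<tau>) 0 / (real n + 1))"
  have T: "1 \<le> real T" using assms by simp
  have T_pow: "real T ^ n = real T * real T ^ (n - 1)"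
    unfolding n_def by (simp add: power_Suc[symmetric])
  have "real m \<le> real T powr ((1 - \<tau>) / (real n + 1))"
    unfolding m_def by (simp add: of_nat_floor)
  also have "\<dots> \<le> P"
    unfolding P_def using T by (intro powr_mono divide_right_mono) auto
  finally have m_le: "real m \<le> P" .
  have P_ge: "1 \<le> P"
    unfolding P_def using T by (simp add: ge_one_powr_ge_zero)
  have P_pow: "P^(n+1) = real T powr max (1 - \<tau>) 0"
  proof -
    have "P^(n+1) = P powr real (n+1)" using P_ge by (subst powr_realpow) auto
    also have "\<dots> = real T powr max (1 - \<tau>) 0" unfolding P_def powr_powr by (simp add: add.commute)
    finally show ?thesis .
  qed
  have "N_count \<tau> T TYPE('n) \<le> card {w \<in> (grid T :: (int^'n) set). e_res (\<chi> i. of_int (w$i) / real T) \<le> m}"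
    unfolding m_def n_def by (rule N_count_le_card_small_e_res)
  also have "\<dots> \<le> (2*m+1)^n * (2*n*m + 1) * T^(n - 1)"
    unfolding n_def by (rule card_small_e_res_le[OF assms])
  finally have "real (N_count \<tau> T TYPE('n)) \<le> real ((2*m+1)^n * (2*n*m + 1)) * real T^(n - 1)"
    by (metis of_nat_le_iff of_nat_mult of_nat_power)
  also have "\<dots> \<le> 3^n * (2*real n + 1) * P^(n+1) * real T^(n - 1)"
    by (rule mult_right_mono[OF counting_bound_le_power[OF m_le P_ge]]) simp
  finally have "real (N_count \<tau> T TYPE('n)) / real T ^ n
      \<le> 3^n * (2*real n + 1) * P^(n+1) * real T^(n - 1) / real T ^ n"
    by (simp add: divide_right_mono)
  also have "\<dots> = 3^n * (2*real n + 1) * real T powr max (1 - \<tau>) 0 / real T"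
    using T unfolding P_pow T_pow by simp
  also have "\<dots> = 3^n * (2*real n + 1) * real T powr (max (1 - \<tau>) 0 - 1)"
    using T by (simp add: powr_diff)
  finally show ?thesis unfolding n_def .
qed

theorem mainTheorem4:
  fixes \<tau> :: real
  assumes "\<tau> > 0"
  shows "(\<lambda>T::nat. real (N_count \<tau> T TYPE('n::finite)) / real T ^ CARD('n))
           \<longlonglongrightarrow> 0"
proof (rule tendsto_sandwich[OF _ _ tendsto_const])
  define C :: real where "C = 3^CARD('n) * (2*real CARD('n) + 1)"
  have "max (1 - \<tau>) 0 - 1 < 0" using assms by simp
  then show "(\<lambda>T. C * real T powr (max (1 - \<tau>) 0 - 1)) \<longlonglongrightarrow> 0"
    using tendsto_mult_right_zero[OF tendsto_neg_powr[OF _ filterlim_real_sequentially]] by simp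
  show "\<forall>\<^sub>F T in sequentially. real (N_count \<tau> T TYPE('n)) / real T ^ CARD('n)
      \<le> C * real T powr (max (1 - \<tau>) 0 - 1)"
    using eventually_gt_at_top[of 0] unfolding C_def by eventually_elim (rule N_count_ratio_le)
qed simp

end
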